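(* The truncation $\hat \gamma(t) = \sum_{-(d-1)D \le i \le D} a_i t^i$ of the real parametrisation $\gamma(t)= \sum_{-\infty \le i \le D} a_i t^i$ (with $D=d^{n-1}$) of a real branch at infinity $\Gamma$ of $M_a(f)$ has the following properties: (a) $\lim_{t \to \infty} \|\hat \gamma(t)\| = \lim_{t \to \infty} \|\gamma(t)\| = \infty$. (b) $\lim_{t \to \infty} f(\hat \gamma(t))= \lim_{t \to \infty} f(\gamma(t))= t_0$. (c) $\lim_{t\to \infty} \frac{\partial f }{ \partial x_i }(\hat \gamma(t)) = \lim_{t\to \infty} \frac{\partial f }{ \partial x_i }(\gamma(t)) = 0$, for any $i$. (d) $\lim_{t\to \infty}x_j \frac{\partial f }{ \partial x_i }(\hat \gamma(t)) = \lim_{t\to \infty}x_j \frac{\partial f }{ \partial x_i }(\gamma(t)) = 0$, for any $i, j$.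
   Context: Let $f\colon{\mathbb R}^n\to{\mathbb R}$ be a polynomial function of degree $d \ge 2$. For $a\in{\mathbb R}^n$ let $\rho_a(x)=\|x-a\|^2$ and let $M_a(f)$ be the critical set of the mapping $(f,\rho_a)\colon{\mathbb R}^n\to{\mathbb R}^2$ (Milnor set). Let $S_a(f)$ be the set of $t_0\in{\mathbb R}$ such that there is a sequence $x_j\in M_a(f)$ with $\|x_j\|\to\infty$ and $f(x_j)\to t_0$, and let $\mathcal{S}_\infty(f)=\bigcap_{a\in{\mathbb R}^n} S_a(f)$. Let $t_0\in \mathcal{S}_\infty(f)$. Then for $a$ in an open dense subset of ${\mathbb R}^n$, $M_a(f)\setminus{\rm Sing} f$ is a nonsingular curve (or empty), $M_a(f)$ is a real affine algebraic set of dimension 1 whose complexification is a locally complete intersection of degree $D:=d^{n-1}$, and there is a real branch at infinity $\Gamma\subset M_a(f)$ with $\lim_{x\in \Gamma, \| x\| \to \infty} f(x)= t_0$. Let $\gamma(t)= \sum_{-\infty \le i \le D} a_i t^i$ (with $a_i\in{\mathbb R}^n$), $t\in{\mathbb R}$, $|t|>R$ for some $R\gg1$, be a real parametrisation of $\Gamma$ (obtained from Puiseux parametrisations of complex branches at infinity following Milnor's procedure), and let $\hat \gamma(t) = \sum_{-(d-1)D \le i \le D} a_i t^i$ be its truncation at the left to the bound $-(d-1)D$. *)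

theory Defs
  imports "HOL-Analysis.Analysis"
begin

definition poly_fun_of_degree :: "(real^'n \<Rightarrow> real) \<Rightarrow> nat \<Rightarrow> bool" where
  "poly_fun_of_degree f d \<longleftrightarrow>
     (\<exists>c :: ('n \<Rightarrow> nat) \<Rightarrow> real.
        finite {\<alpha>. c \<alpha> \<noteq> 0} \<and>
        (\<forall>x. f x = (\<Sum>\<alpha>\<in>{\<alpha>. c \<alpha> \<noteq> 0}. c \<alpha> * (\<Prod>i\<in>UNIV. (x $ i) ^ \<alpha> i))) \<and>
        (\<forall>\<alpha>. c \<alpha> \<noteq> 0 \<longrightarrow> (\<Sum>i\<in>UNIV. \<alpha> i) \<le> d) \<and>
        (\<exists>\<alpha>. c \<alpha> \<noteq> 0 \<and> (\<Sum>i\<in>UNIV. \<alpha> i) = d))"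

definition partial :: "(real^'n \<Rightarrow> real) \<Rightarrow> 'n \<Rightarrow> real^'n \<Rightarrow> real" where
  "partial f i x = deriv (\<lambda>s. f (x + s *\<^sub>R axis i 1)) 0"

definition rho :: "real^'n \<Rightarrow> real^'n \<Rightarrow> real" where
  "rho a x = (norm (x - a))^2"

definition milnor_set :: "(real^'n \<Rightarrow> real) \<Rightarrow> real^'n \<Rightarrow> (real^'n) set" where
  "milnor_set f a = {x. \<not> surj (frechet_derivative (\<lambda>y. (f y, rho a y)) (at x))}"

definition S_set :: "(real^'n \<Rightarrow> real) \<Rightarrow> real^'n \<Rightarrow> real set" where
  "S_set f a = {t0. \<exists>x :: nat \<Rightarrow> real^'n. (\<forall>j. x j \<in> milnor_set f a) \<and>
       filterlim (\<lambda>j. norm (x j)) at_top sequentially \<and> (\<lambda>j. f (x j)) \<longlonglongrightarrow> t0}"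

definition S_infty :: "(real^'n \<Rightarrow> real) \<Rightarrow> real set" where
  "S_infty f = (\<Inter>a. S_set f a)"

end

theory Submission
  imports Defs
begin

text \<open>
  Every coordinate of \<open>\<gamma>\<close> has the form \<open>t^D q(1/t)\<close> with \<open>q\<close> a convergent power series, and so
  have \<open>f \<circ> \<gamma>\<close> and \<open>\<rho>\<^sub>a \<circ> \<gamma>\<close>. For such a function \<open>u\<close>, \<open>t u'(t) \<rightarrow> 0\<close> if \<open>u\<close> converges, and
  \<open>t u'(t) \<ge> c u(t)\<close> for large \<open>t\<close> if \<open>u \<rightarrow> \<infinity>\<close>. On the Milnor set \<open>grad f = \<mu> grad \<rho>\<^sub>a\<close>, hence
  \<open>(f \<circ> \<gamma>)' = \<mu> (\<rho>\<^sub>a \<circ> \<gamma>)'\<close> and \<open>\<bar>\<mu>\<bar> \<rho>\<^sub>a(\<gamma> t) \<le> \<bar>t (f \<circ> \<gamma>)'(t)\<bar> / c \<rightarrow> 0\<close>; this quantity dominates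
  \<open>\<partial>\<^sub>if(\<gamma> t)\<close> and \<open>x\<^sub>j \<partial>\<^sub>if(\<gamma> t)\<close>. Finally \<open>\<gamma>\<close> and its truncation are both \<open>O(t^D)\<close> and differ by
  \<open>O(t^-((d-1)D+1))\<close>, so a polynomial of degree at most \<open>d\<close> (such as \<open>f\<close>, \<open>\<partial>\<^sub>if\<close> and
  \<open>x\<^sub>j \<partial>\<^sub>if\<close>) changes by \<open>O(1/t)\<close> between them.
\<close>

section \<open>Functions with a Laurent expansion at infinity\<close>

definition laurent_at_top :: "(real \<Rightarrow> real) \<Rightarrow> bool" where
  "laurent_at_top u \<longleftrightarrow>
     (\<exists>N g G. g has_fps_expansion G \<and> eventually (\<lambda>t. u t = t ^ N * g (1 / t)) at_top)"

lemma laurent_at_topI: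
  assumes "g has_fps_expansion G" "eventually (\<lambda>t. u t = t ^ N * g (1 / t)) at_top"
  shows "laurent_at_top u"
  using assms unfolding laurent_at_top_def by blast

lemma laurent_at_top_const: "laurent_at_top (\<lambda>_. c)"
  by (rule laurent_at_topI[of "\<lambda>_. c" _ _ 0]) (auto intro: has_fps_expansion_const)

lemma laurent_at_top_add:
  assumes "laurent_at_top u" "laurent_at_top v"
  shows "laurent_at_top (\<lambda>t. u t + v t)"
proof -
  obtain N g G M h H where exp: "g has_fps_expansion G" "h has_fps_expansion H"
    and ev: "eventually (\<lambda>t. u t = t ^ N * g (1 / t)) at_top" "eventually (\<lambda>t. v t = t ^ M * h (1 / t)) at_top"
    using assms unfolding laurent_at_top_def by blast
  show ?thesis
  proof (rule laurent_at_topI)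
    show "(\<lambda>s. s ^ M * g s + s ^ N * h s) has_fps_expansion fps_X ^ M * G + fps_X ^ N * H"
      by (intro has_fps_expansion_add has_fps_expansion_mult has_fps_expansion_fps_X_power exp)
    show "eventually (\<lambda>t. u t + v t = t ^ (N + M) * ((1 / t) ^ M * g (1 / t) + (1 / t) ^ N * h (1 / t))) at_top"
      using ev eventually_gt_at_top[of 0] by eventually_elim (simp add: field_simps power_add)
  qed
qed

lemma laurent_at_top_mult:
  assumes "laurent_at_top u" "laurent_at_top v"
  shows "laurent_at_top (\<lambda>t. u t * v t)"
proof -
  obtain N g G M h H where exp: "g has_fps_expansion G" "h has_fps_expansion H"
    and ev: "eventually (\<lambda>t. u t = t ^ N * g (1 / t)) at_top" "eventually (\<lambda>t. v t = t ^ M * h (1 / t)) at_top"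
    using assms unfolding laurent_at_top_def by blast
  show ?thesis
  proof (rule laurent_at_topI)
    show "(\<lambda>s. g s * h s) has_fps_expansion G * H"
      by (intro has_fps_expansion_mult exp)
    show "eventually (\<lambda>t. u t * v t = t ^ (N + M) * (g (1 / t) * h (1 / t))) at_top"
      using ev by eventually_elim (simp add: power_add)
  qed
qed

lemma laurent_at_top_diff:
  assumes "laurent_at_top u" "laurent_at_top v"
  shows "laurent_at_top (\<lambda>t. u t - v t)"
  using laurent_at_top_add[OF assms(1) laurent_at_top_mult[OF laurent_at_top_const[of "-1"] assms(2)]]
  by simp

lemma laurent_at_top_power:
  "laurent_at_top u \<Longrightarrow> laurent_at_top (\<lambda>t. u t ^ n)"
  by (induction n) (simp_all add: laurent_at_top_const laurent_at_top_mult)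

lemma laurent_at_top_sum:
  "(\<And>x. x \<in> A \<Longrightarrow> laurent_at_top (u x)) \<Longrightarrow> laurent_at_top (\<lambda>t. \<Sum>x\<in>A. u x t)"
  by (induction A rule: infinite_finite_induct) (simp_all add: laurent_at_top_const laurent_at_top_add)

lemma laurent_at_top_prod:
  "(\<And>x. x \<in> A \<Longrightarrow> laurent_at_top (u x)) \<Longrightarrow> laurent_at_top (\<lambda>t. \<Prod>x\<in>A. u x t)"
  by (induction A rule: infinite_finite_induct) (simp_all add: laurent_at_top_const laurent_at_top_mult)

lemma eventually_inverse_at_top:
  "eventually P (nhds (0::real)) \<Longrightarrow> eventually (\<lambda>t. P (inverse t)) at_top"
  using filterlim_iff tendsto_inverse_0_at_top[OF filterlim_ident] by blast

lemma eventually_has_fps_expansion_inverse: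
  fixes g :: "real \<Rightarrow> real"
  assumes "g has_fps_expansion F"
  shows "eventually (\<lambda>t. g (inverse t) = eval_fps F (inverse t) \<and>
           ereal (norm (inverse t)) < fps_conv_radius F) at_top"
proof -
  obtain e :: real where e: "0 < ereal e" "ereal e < fps_conv_radius F"
    using ereal_dense2[of 0 "fps_conv_radius F"] assms
    by (auto simp: has_fps_expansion_def zero_ereal_def)
  have "eventually (\<lambda>z::real. ereal (norm z) < fps_conv_radius F) (nhds 0)"
    unfolding eventually_nhds_metric using e
    by (intro exI[of _ e]) (auto intro: order.strict_trans[of _ "ereal e"])
  moreover have "eventually (\<lambda>z. g z = eval_fps F z) (nhds 0)"
    using assms by (auto simp: has_fps_expansion_def elim: eventually_mono)
  ultimately show ?thesis
    by (intro eventually_inverse_at_top) (auto elim: eventually_elim2)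
qed

lemma tendsto_eval_fps_inverse:
  fixes F :: "real fps"
  assumes "fps_conv_radius F > 0"
  shows "((\<lambda>t. eval_fps F (inverse t)) \<longlongrightarrow> eval_fps F 0) at_top"
proof -
  have "isCont (eval_fps F) 0"
    by (rule continuous_eval_fps) (use assms in \<open>simp add: zero_ereal_def\<close>)
  then show ?thesis
    by (rule isCont_tendsto_compose[OF _ tendsto_inverse_0_at_top[OF filterlim_ident]])
qed

lemma laurent_at_top_normal_form:
  assumes "laurent_at_top u"
  shows "eventually (\<lambda>t. u t = 0) at_top \<or>
    (\<exists>k G. fps_conv_radius G > 0 \<and> fps_nth G 0 \<noteq> 0 \<and>
       eventually (\<lambda>t. u t = t powi k * eval_fps G (inverse t)) at_top)"
proof -
  obtain N g F where exp: "g has_fps_expansion F"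
    and u: "eventually (\<lambda>t. u t = t ^ N * g (1 / t)) at_top"
    using assms unfolding laurent_at_top_def by blast
  have ev: "eventually (\<lambda>t. u t = t ^ N * eval_fps F (inverse t) \<and>
      ereal (norm (inverse t)) < fps_conv_radius F \<and> t > 0) at_top"
    using u eventually_has_fps_expansion_inverse[OF exp] eventually_gt_at_top[of 0]
    by eventually_elim (simp add: divide_inverse)
  show ?thesis
  proof (cases "F = 0")
    case True
    then show ?thesis using ev by (auto elim: eventually_mono)
  next
    case False
    define m where "m = subdegree F"
    define G where "G = fps_shift m F"
    have radius: "fps_conv_radius G > 0"
      using exp by (simp add: G_def has_fps_expansion_def)
    have "eventually (\<lambda>t. u t = t powi (int N - int m) * eval_fps G (inverse t)) at_top"
      using ev
    proof eventually_elim
      case (elim t)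
      then have "norm (inverse t) < fps_conv_radius F" by blast
      then have "eval_fps G (inverse t) = eval_fps F (inverse t) / inverse t ^ m"
        using eval_fps_shift[of m F "inverse t"] elim by (simp add: G_def m_def)
      with elim show ?case
        by (simp add: power_int_diff field_simps)
    qed
    moreover have "fps_nth G 0 \<noteq> 0"
      using False by (simp add: G_def m_def)
    ultimately show ?thesis using radius by blast
  qed
qed

lemma has_real_derivative_powi_eval_fps_inverse:
  fixes G :: "real fps"
  assumes "t > 0" "norm (inverse t) < fps_conv_radius G"
  shows "((\<lambda>t. t powi k * eval_fps G (inverse t)) has_real_derivative
     t powi (k - 1) * (of_int k * eval_fps G (inverse t) - inverse t * eval_fps (fps_deriv G) (inverse t)))
     (at t)"
proof -
  have "((\<lambda>t. eval_fps G (inverse t)) has_real_derivative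
          eval_fps (fps_deriv G) (inverse t) * - (inverse t ^ Suc (Suc 0))) (at t)"
    using assms by (intro DERIV_chain2[OF has_field_derivative_eval_fps DERIV_inverse]) auto
  then have "((\<lambda>t. t powi k * eval_fps G (inverse t)) has_real_derivative
      of_int k * t powi (k - 1) * eval_fps G (inverse t)
        + t powi k * (eval_fps (fps_deriv G) (inverse t) * - (inverse t ^ Suc (Suc 0)))) (at t)"
    using assms(1) by (auto intro!: derivative_eq_intros)
  moreover have "t powi k = t powi (k - 1) * t"
    using assms(1) power_int_minus_mult[of t k] by simp
  ultimately show ?thesis
    using assms(1) by (auto elim!: DERIV_cong simp: field_simps)
qed

lemma tendsto_powi_at_top_nonpos:
  assumes "k \<le> 0"
  shows "((\<lambda>t::real. t powi k) \<longlongrightarrow> (if k = 0 then 1 else 0)) at_top"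
proof (cases "k = 0")
  case False
  have "((\<lambda>t::real. inverse t ^ nat (-k)) \<longlongrightarrow> 0 ^ nat (-k)) at_top"
    by (intro tendsto_intros tendsto_inverse_0_at_top filterlim_ident)
  moreover have "(\<lambda>t::real. inverse t ^ nat (-k)) = (\<lambda>t. t powi k)"
    using assms by (auto simp: power_int_def fun_eq_iff)
  ultimately show ?thesis using assms False by (simp add: power_0_left)
qed simp

lemma filterlim_powi_at_top:
  assumes "k > 0"
  shows "filterlim (\<lambda>t::real. t powi k) at_top at_top"
proof -
  have "filterlim (\<lambda>t::real. t ^ nat k) at_top at_top"
    using assms by (intro filterlim_pow_at_top filterlim_ident) auto
  moreover have "(\<lambda>t::real. t ^ nat k) = (\<lambda>t. t powi k)"
    using assms by (auto simp: power_int_def fun_eq_iff)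
  ultimately show ?thesis by simp
qed

lemma eventually_has_real_derivative_cong:
  assumes "eventually (\<lambda>t. u t = v t) at_top"
    and "eventually (\<lambda>t. (v has_real_derivative v' t) (at t)) at_top"
  shows "eventually (\<lambda>t. (u has_real_derivative v' t) (at t)) at_top"
proof -
  obtain T where T: "\<And>t. t \<ge> T \<Longrightarrow> u t = v t"
    using assms(1) by (auto simp: eventually_at_top_linorder)
  show ?thesis
    using assms(2) eventually_gt_at_top[of T]
  proof eventually_elim
    case (elim t)
    show ?case
      by (rule has_field_derivative_transform_within_open[OF elim(1), of "{T<..}"])
        (use elim in \<open>auto simp: T\<close>)
  qed
qed

lemma powi_mult_tendsto_imp_nonpos:
  fixes g :: "real \<Rightarrow> real"
  assumes g: "(g \<longlongrightarrow> c) at_top" "c \<noteq> 0" and "((\<lambda>t. t powi k * g t) \<longlongrightarrow> L) at_top"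
  shows "k \<le> 0"
proof (rule ccontr)
  assume "\<not> k \<le> 0"
  then have "filterlim (\<lambda>t::real. t powi k) at_infinity at_top"
    by (simp add: filterlim_at_top_imp_at_infinity filterlim_powi_at_top)
  then have "filterlim (\<lambda>t. g t * t powi k) at_infinity at_top"
    by (rule tendsto_mult_filterlim_at_infinity[OF g])
  then show False
    using not_tendsto_and_filterlim_at_infinity[OF _ assms(3)] by (simp add: mult.commute)
qed

lemma powi_mult_filterlim_at_top_imp_pos:
  fixes g :: "real \<Rightarrow> real"
  assumes g: "(g \<longlongrightarrow> c) at_top" "c \<noteq> 0" and top: "filterlim (\<lambda>t. t powi k * g t) at_top at_top"
  shows "k > 0" and "c > 0"
proof -
  show "k > 0"
  proof (rule ccontr)
    assume "\<not> k > 0"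
    then have "((\<lambda>t. t powi k * g t) \<longlongrightarrow> (if k = 0 then 1 else 0) * c) at_top"
      by (intro tendsto_mult g tendsto_powi_at_top_nonpos) simp
    then show False
      using not_tendsto_and_filterlim_at_infinity[OF _ _ filterlim_at_top_imp_at_infinity[OF top]]
      by simp
  qed
  have "eventually (\<lambda>t. 0 \<le> g t) at_top"
    using top[unfolded filterlim_at_top, rule_format, of 1] eventually_gt_at_top[of 0]
  proof eventually_elim
    case (elim t)
    then have "0 < t powi k * g t" and "0 < t powi k" by simp_all
    then show ?case by (simp add: zero_less_mult_iff)
  qed
  then have "c \<ge> 0"
    by (rule tendsto_lowerbound[OF g(1)]) simp
  then show "c > 0"
    using g(2) by simp
qed

text \<open>Here \<open>t * u' t = t powi k * (k * g t - g' t / t)\<close> is the form of \<open>t\<close> times the derivative of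
  \<open>t powi k * q (1/t)\<close> with \<open>g t = q (1/t)\<close> and \<open>g' t = q' (1/t)\<close>.\<close>
lemma powi_mult_derivative_asymptotics:
  fixes g g' u u' :: "real \<Rightarrow> real"
  assumes g: "(g \<longlongrightarrow> c) at_top" "c \<noteq> 0" and g': "(g' \<longlongrightarrow> c') at_top"
    and u: "eventually (\<lambda>t. u t = t powi k * g t) at_top"
    and u': "eventually (\<lambda>t. t * u' t = t powi k * (of_int k * g t - inverse t * g' t)) at_top"
  shows "(u \<longlongrightarrow> L) at_top \<Longrightarrow> ((\<lambda>t. t * u' t) \<longlongrightarrow> 0) at_top"
    and "filterlim u at_top at_top \<Longrightarrow> \<exists>c>0. eventually (\<lambda>t. c * u t \<le> t * u' t) at_top"
proof -
  assume "(u \<longlongrightarrow> L) at_top"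
  then have "k \<le> 0"
    using u by (intro powi_mult_tendsto_imp_nonpos[OF g]) (simp add: tendsto_cong)
  then have "((\<lambda>t::real. of_int k * t powi k) \<longlongrightarrow> 0) at_top"
    using tendsto_mult_left[OF tendsto_powi_at_top_nonpos, of k "of_int k"] by (cases "k = 0") simp_all
  then have "((\<lambda>t. of_int k * t powi k * g t - t powi k * (inverse t * g' t))
      \<longlongrightarrow> 0 * c - (if k = 0 then 1 else 0) * (0 * c')) at_top"
    by (intro tendsto_intros g g' tendsto_powi_at_top_nonpos \<open>k \<le> 0\<close> tendsto_inverse_0_at_top
        filterlim_ident)
  moreover have "(\<lambda>t. of_int k * t powi k * g t - t powi k * (inverse t * g' t))
      = (\<lambda>t. t powi k * (of_int k * g t - inverse t * g' t))"
    by (simp add: fun_eq_iff algebra_simps)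
  ultimately show "((\<lambda>t. t * u' t) \<longlongrightarrow> 0) at_top"
    using u' by (simp add: tendsto_cong)
next
  assume "filterlim u at_top at_top"
  then have top: "filterlim (\<lambda>t. t powi k * g t) at_top at_top"
    using u by (simp add: filterlim_cong)
  define b where "b t = (of_int k - 1/2) * g t - inverse t * g' t" for t
  have "(b \<longlongrightarrow> (of_int k - 1/2) * c - 0 * c') at_top"
    unfolding b_def by (intro tendsto_intros g g' tendsto_inverse_0_at_top filterlim_ident)
  moreover have "(of_int k - 1/2) * c - 0 * c' > 0"
    using powi_mult_filterlim_at_top_imp_pos[OF g top] by simp
  ultimately have "eventually (\<lambda>t. b t > 0) at_top"
    by (rule order_tendstoD)
  then have "eventually (\<lambda>t. 1/2 * u t \<le> t * u' t) at_top"
    using u u' eventually_gt_at_top[of 0]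
  proof eventually_elim
    case (elim t)
    then have "t * u' t - 1/2 * u t = t powi k * b t"
      by (simp add: b_def algebra_simps)
    moreover have "0 < t powi k * b t"
      using elim by simp
    ultimately show ?case by simp
  qed
  then show "\<exists>c>0. eventually (\<lambda>t. c * u t \<le> t * u' t) at_top"
    by (intro exI[of _ "1/2"]) simp
qed

lemma powi_eval_fps_inverse_derivative_asymptotics:
  fixes G :: "real fps"
  assumes radius: "fps_conv_radius G > 0" and "fps_nth G 0 \<noteq> 0"
    and u: "eventually (\<lambda>t. u t = t powi k * eval_fps G (inverse t)) at_top"
  obtains u' where "eventually (\<lambda>t. (u has_real_derivative u' t) (at t)) at_top"
    and "\<And>L. (u \<longlongrightarrow> L) at_top \<Longrightarrow> ((\<lambda>t. t * u' t) \<longlongrightarrow> 0) at_top"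
    and "filterlim u at_top at_top \<Longrightarrow> \<exists>c>0. eventually (\<lambda>t. c * u t \<le> t * u' t) at_top"
proof -
  define q where "q = eval_fps G"
  define q' where "q' = eval_fps (fps_deriv G)"
  define u' where "u' t = t powi (k - 1) * (of_int k * q (inverse t) - inverse t * q' (inverse t))" for t
  have q: "((\<lambda>t. q (inverse t)) \<longlongrightarrow> q 0) at_top" and "q 0 \<noteq> 0"
    unfolding q_def using tendsto_eval_fps_inverse[OF radius] assms(2) by (simp_all add: eval_fps_at_0)
  have q': "((\<lambda>t. q' (inverse t)) \<longlongrightarrow> q' 0) at_top"
    unfolding q'_def using radius fps_conv_radius_deriv[of G]
    by (intro tendsto_eval_fps_inverse) (auto intro: less_le_trans)
  have large: "eventually (\<lambda>t::real. t > 0 \<and> norm (inverse t) < fps_conv_radius G) at_top"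
    using eventually_gt_at_top[of 0]
      eventually_has_fps_expansion_inverse[OF eval_fps_has_fps_expansion[OF radius]]
    by eventually_elim blast
  have "eventually (\<lambda>t. (u has_real_derivative u' t) (at t)) at_top"
    unfolding u'_def q_def q'_def
    by (rule eventually_has_real_derivative_cong[OF u], rule eventually_mono[OF large])
      (auto intro: has_real_derivative_powi_eval_fps_inverse)
  moreover have "eventually (\<lambda>t. t * u' t =
      t powi k * (of_int k * q (inverse t) - inverse t * q' (inverse t))) at_top"
    using large
  proof eventually_elim
    case (elim t)
    then have "t * t powi (k - 1) = t powi k"
      using power_int_minus_mult[of t k] by (simp add: mult.commute)
    then show ?case by (simp add: u'_def flip: mult.assoc)
  qed
  moreover have "eventually (\<lambda>t. u t = t powi k * q (inverse t)) at_top"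
    using u by (simp add: q_def)
  ultimately show thesis
    using that powi_mult_derivative_asymptotics[OF q \<open>q 0 \<noteq> 0\<close> q'] by blast
qed

lemma laurent_at_top_derivative:
  assumes "laurent_at_top u"
  obtains u' where "eventually (\<lambda>t. (u has_real_derivative u' t) (at t)) at_top"
    and "\<And>L. (u \<longlongrightarrow> L) at_top \<Longrightarrow> ((\<lambda>t. t * u' t) \<longlongrightarrow> 0) at_top"
    and "filterlim u at_top at_top \<Longrightarrow> \<exists>c>0. eventually (\<lambda>t. c * u t \<le> t * u' t) at_top"
  using laurent_at_top_normal_form[OF assms]
proof (elim disjE exE conjE)
  assume zero: "eventually (\<lambda>t. u t = 0) at_top"
  have "eventually (\<lambda>t. (u has_real_derivative 0) (at t)) at_top"
    by (rule eventually_has_real_derivative_cong[OF zero]) simp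
  moreover have False if "filterlim u at_top at_top"
  proof -
    have "eventually (\<lambda>t. 1 \<le> u t) at_top"
      using that by (simp add: filterlim_at_top)
    with zero have "eventually (\<lambda>t::real. False) at_top"
      by eventually_elim simp
    then show False by simp
  qed
  ultimately show thesis by (intro that[of "\<lambda>_. 0"]) auto
qed (rule powi_eval_fps_inverse_derivative_asymptotics, assumption+, rule that)

lemma has_vector_derivative_cart:
  fixes \<gamma> :: "real \<Rightarrow> real^'n"
  assumes "\<And>j. ((\<lambda>t. \<gamma> t $ j) has_real_derivative v $ j) (at t)"
  shows "(\<gamma> has_vector_derivative v) (at t)"
  unfolding has_vector_derivative_def
proof (subst has_derivative_componentwise_within, intro ballI)
  fix b :: "real^'n" assume "b \<in> Basis"
  then obtain j where b: "b = axis j 1" by (auto simp: Basis_vec_def)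
  show "((\<lambda>x. \<gamma> x \<bullet> b) has_derivative (\<lambda>x. (x *\<^sub>R v) \<bullet> b)) (at t)"
    using assms[of j] by (simp add: b inner_axis has_field_derivative_def mult_commute_abs)
qed

lemma laurent_at_top_has_vector_derivative:
  fixes \<gamma> :: "real \<Rightarrow> real^'n"
  assumes "\<And>j. laurent_at_top (\<lambda>t. \<gamma> t $ j)"
  obtains \<gamma>' where "eventually (\<lambda>t. (\<gamma> has_vector_derivative \<gamma>' t) (at t)) at_top"
proof -
  have "\<forall>j. \<exists>u'. eventually (\<lambda>t. ((\<lambda>t. \<gamma> t $ j) has_real_derivative u' t) (at t)) at_top"
    using laurent_at_top_derivative[OF assms] by metis
  then obtain u' where "\<And>j. eventually (\<lambda>t. ((\<lambda>t. \<gamma> t $ j) has_real_derivative u' j t) (at t)) at_top"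
    by metis
  then have "eventually (\<lambda>t. \<forall>j. ((\<lambda>t. \<gamma> t $ j) has_real_derivative u' j t) (at t)) at_top"
    by (intro eventually_all_finite)
  then have "eventually (\<lambda>t. (\<gamma> has_vector_derivative (\<chi> j. u' j t)) (at t)) at_top"
    by eventually_elim (simp add: has_vector_derivative_cart)
  then show thesis by (rule that)
qed

section \<open>The Milnor condition along a branch\<close>

lemma filterlim_norm_minus_const_at_top:
  fixes x :: "'a \<Rightarrow> 'b::real_normed_vector"
  assumes "filterlim (\<lambda>t. norm (x t)) at_top F"
  shows "filterlim (\<lambda>t. norm (x t - a)) at_top F"
proof (rule filterlim_at_top_mono)
  show "filterlim (\<lambda>t. - norm a + norm (x t)) at_top F"
    by (rule filterlim_tendsto_add_at_top[OF tendsto_const assms])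
  show "eventually (\<lambda>t. - norm a + norm (x t) \<le> norm (x t - a)) F"
    using norm_triangle_ineq2[of _ a] by (auto intro: always_eventually)
qed

lemma filterlim_norm_at_top_close:
  fixes x y :: "'a \<Rightarrow> 'b::real_normed_vector"
  assumes "filterlim (\<lambda>t. norm (x t)) at_top F" "((\<lambda>t. norm (x t - y t)) \<longlongrightarrow> 0) F"
  shows "filterlim (\<lambda>t. norm (y t)) at_top F"
proof (rule filterlim_at_top_mono)
  show "filterlim (\<lambda>t. - norm (x t - y t) + norm (x t)) at_top F"
    using filterlim_tendsto_add_at_top[OF tendsto_minus[OF assms(2)] assms(1)] by simp
  show "eventually (\<lambda>t. - norm (x t - y t) + norm (x t) \<le> norm (y t)) F"
    using norm_triangle_ineq2[of "x t" "y t" for t] by (simp add: algebra_simps)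
qed

lemma has_real_derivative_vector_comp:
  fixes \<gamma> :: "real \<Rightarrow> 'a::real_normed_vector"
  assumes "(\<gamma> has_vector_derivative v) (at t)" "(f has_derivative f') (at (\<gamma> t))"
  shows "((\<lambda>t. f (\<gamma> t)) has_real_derivative f' v) (at t)"
  using vector_derivative_diff_chain_within[OF assms(1) has_derivative_at_withinI[OF assms(2)]]
  by (simp add: has_real_derivative_iff_has_vector_derivative o_def)

lemma partial_eq_has_derivative:
  assumes "(f has_derivative f') (at x)"
  shows "partial f i x = f' (axis i 1)"
proof -
  have "((\<lambda>s::real. x + s *\<^sub>R axis i 1) has_derivative (\<lambda>s. s *\<^sub>R axis i 1)) (at 0)"
    by (auto intro!: derivative_eq_intros)
  from diff_chain_at[OF this] assms
  have "((\<lambda>s. f (x + s *\<^sub>R axis i 1)) has_derivative (\<lambda>s. f' (s *\<^sub>R axis i 1))) (at 0)"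
    by (simp add: o_def)
  moreover have "(\<lambda>s. f' (s *\<^sub>R axis i 1)) = (*) (f' (axis i 1))"
    using linear_cmul[OF has_derivative_linear[OF assms]] by (auto simp: fun_eq_iff)
  ultimately show ?thesis
    unfolding partial_def by (intro DERIV_imp_deriv) (simp add: has_field_derivative_def)
qed

lemma proportional_if_pair_not_surj:
  fixes l1 l2 :: "'a::real_vector \<Rightarrow> real"
  assumes l1: "linear l1" and l2: "linear l2" and w: "l2 w \<noteq> 0"
    and not_surj: "\<not> surj (\<lambda>v. (l1 v, l2 v))"
  obtains \<mu> where "\<And>v. l1 v = \<mu> * l2 v"
proof (rule ccontr)
  assume "\<not> thesis"
  then have "\<forall>\<mu>. \<exists>v. l1 v \<noteq> \<mu> * l2 v" using that by blast
  define v2 where "v2 = (1 / l2 w) *\<^sub>R w"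
  have l2v2: "l2 v2 = 1" using w by (simp add: v2_def linear_cmul[OF l2])
  obtain v where v: "l1 v \<noteq> l1 v2 * l2 v" using \<open>\<forall>\<mu>. _\<close> by blast
  define u where "u = v - l2 v *\<^sub>R v2"
  have l2u: "l2 u = 0" by (simp add: u_def linear_diff[OF l2] linear_cmul[OF l2] l2v2)
  have l1u: "l1 u \<noteq> 0" using v by (simp add: u_def linear_diff[OF l1] linear_cmul[OF l1] mult.commute)
  have "surj (\<lambda>v. (l1 v, l2 v))"
  proof (rule surjI[where f = "\<lambda>(p, q). ((p - q * l1 v2) / l1 u) *\<^sub>R u + q *\<^sub>R v2"])
    fix pq :: "real \<times> real"
    show "(\<lambda>v. (l1 v, l2 v)) ((\<lambda>(p, q). ((p - q * l1 v2) / l1 u) *\<^sub>R u + q *\<^sub>R v2) pq) = pq"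
      using l1u by (cases pq) (simp add: linear_add[OF l1] linear_add[OF l2] linear_cmul[OF l1]
          linear_cmul[OF l2] l2u l2v2)
  qed
  then show False using not_surj by simp
qed

lemma has_derivative_rho: "(rho a has_derivative (\<lambda>v. 2 * ((x - a) \<bullet> v))) (at x)"
proof -
  have "rho a = (\<lambda>y. (y - a) \<bullet> (y - a))" by (auto simp: rho_def power2_norm_eq_inner)
  then show ?thesis by (auto intro!: derivative_eq_intros simp: inner_commute)
qed

lemma rho_eq_sum: "rho a x = (\<Sum>i\<in>UNIV. (x $ i - a $ i) ^ 2)"
  unfolding rho_def power2_norm_eq_inner inner_vec_def by (simp add: power2_eq_square)

lemma milnor_set_gradient_proportional:
  assumes "x \<in> milnor_set f a" "x \<noteq> a" and f': "(f has_derivative f') (at x)"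
  obtains \<mu> where "\<And>v. f' v = \<mu> * (2 * ((x - a) \<bullet> v))"
proof (rule proportional_if_pair_not_surj)
  have "((\<lambda>y. (f y, rho a y)) has_derivative (\<lambda>v. (f' v, 2 * ((x - a) \<bullet> v)))) (at x)"
    by (rule has_derivative_Pair[OF f' has_derivative_rho])
  then show "\<not> surj (\<lambda>v. (f' v, 2 * ((x - a) \<bullet> v)))"
    using assms(1) by (simp add: milnor_set_def frechet_derivative_at[symmetric])
  show "linear f'" using f' by (rule has_derivative_linear)
  show "linear (\<lambda>v. 2 * ((x - a) \<bullet> v))" using has_derivative_rho by (rule has_derivative_linear)
  show "2 * ((x - a) \<bullet> (x - a)) \<noteq> 0" using assms(2) by simp
qed (use that in blast)

lemma partial_bounds_of_proportional_derivative:
  fixes x a :: "real^'n"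
  assumes f': "(f has_derivative f') (at x)" and proportional: "\<And>v. f' v = \<mu> * (2 * ((x - a) \<bullet> v))"
    and far: "1 \<le> norm (x - a)"
  shows "\<bar>partial f i x\<bar> \<le> 2 * (1 + norm a) * (\<bar>\<mu>\<bar> * rho a x)"
    and "\<bar>x $ j * partial f i x\<bar> \<le> 2 * (1 + norm a) * (\<bar>\<mu>\<bar> * rho a x)"
proof -
  define n where "n = norm (x - a)"
  have rho: "rho a x = n * n" by (simp add: rho_def n_def power2_eq_square)
  have partial: "\<bar>partial f i x\<bar> \<le> 2 * \<bar>\<mu>\<bar> * n"
  proof -
    have "partial f i x = 2 * \<mu> * (x - a) $ i"
      by (simp add: partial_eq_has_derivative[OF f'] proportional inner_axis)
    then have "\<bar>partial f i x\<bar> = 2 * \<bar>\<mu>\<bar> * \<bar>(x - a) $ i\<bar>"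
      by (simp add: abs_mult)
    also have "\<dots> \<le> 2 * \<bar>\<mu>\<bar> * n"
      unfolding n_def by (intro mult_left_mono component_le_norm_cart) auto
    finally show ?thesis .
  qed
  have "n \<le> n * n" using far mult_left_mono[of 1 n n] by (simp add: n_def)
  have scale: "2 * y \<le> 2 * (1 + norm a) * y" if "y \<ge> 0" for y
    using that by (simp add: algebra_simps)
  have "\<bar>partial f i x\<bar> \<le> 2 * (\<bar>\<mu>\<bar> * (n * n))"
    using partial mult_left_mono[OF \<open>n \<le> n * n\<close>, of "2 * \<bar>\<mu>\<bar>"] by simp
  also have "\<dots> \<le> 2 * (1 + norm a) * (\<bar>\<mu>\<bar> * (n * n))"
    by (rule scale) simp
  finally show "\<bar>partial f i x\<bar> \<le> 2 * (1 + norm a) * (\<bar>\<mu>\<bar> * rho a x)"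
    unfolding rho .
  have "\<bar>x $ j\<bar> \<le> n + norm a"
    using component_le_norm_cart[of x j] norm_triangle_sub[of x a] by (simp add: n_def add.commute)
  then have "\<bar>x $ j * partial f i x\<bar> \<le> (n + norm a) * (2 * \<bar>\<mu>\<bar> * n)"
    unfolding abs_mult using partial by (intro mult_mono) auto
  also have "\<dots> = 2 * \<bar>\<mu>\<bar> * (n * n) + 2 * \<bar>\<mu>\<bar> * norm a * n"
    by (simp add: algebra_simps)
  also have "\<dots> \<le> 2 * \<bar>\<mu>\<bar> * (n * n) + 2 * \<bar>\<mu>\<bar> * norm a * (n * n)"
    using \<open>n \<le> n * n\<close> by (intro add_left_mono mult_left_mono) auto
  also have "\<dots> = 2 * (1 + norm a) * (\<bar>\<mu>\<bar> * rho a x)"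
    by (simp add: rho algebra_simps)
  finally show "\<bar>x $ j * partial f i x\<bar> \<le> 2 * (1 + norm a) * (\<bar>\<mu>\<bar> * rho a x)" .
qed

lemma milnor_branch_partial_bounds:
  fixes f :: "real^'n \<Rightarrow> real" and \<gamma> :: "real \<Rightarrow> real^'n"
  assumes f': "(f has_derivative f') (at (\<gamma> t))" and \<gamma>': "(\<gamma> has_vector_derivative v) (at t)"
    and h': "((\<lambda>t. f (\<gamma> t)) has_real_derivative h') (at t)"
    and r': "((\<lambda>t. rho a (\<gamma> t)) has_real_derivative r') (at t)"
    and milnor: "\<gamma> t \<in> milnor_set f a" and far: "1 \<le> norm (\<gamma> t - a)"
    and "t > 0" "c > 0" and growth: "c * rho a (\<gamma> t) \<le> t * r'"
  shows "\<bar>partial f i (\<gamma> t)\<bar> \<le> 2 * (1 + norm a) * (\<bar>t * h'\<bar> / c)"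
    and "\<bar>\<gamma> t $ j * partial f i (\<gamma> t)\<bar> \<le> 2 * (1 + norm a) * (\<bar>t * h'\<bar> / c)"
proof -
  have "\<gamma> t \<noteq> a" using far by auto
  then obtain \<mu> where \<mu>: "\<And>v. f' v = \<mu> * (2 * ((\<gamma> t - a) \<bullet> v))"
    using milnor_set_gradient_proportional[OF milnor _ f'] by blast
  have "h' = f' v"
    using DERIV_unique[OF h' has_real_derivative_vector_comp[OF \<gamma>' f']] .
  moreover have "r' = 2 * ((\<gamma> t - a) \<bullet> v)"
    using DERIV_unique[OF r' has_real_derivative_vector_comp[OF \<gamma>' has_derivative_rho]] .
  ultimately have "h' = \<mu> * r'" by (simp add: \<mu>)
  have "0 < c * rho a (\<gamma> t)"
    using \<open>c > 0\<close> \<open>\<gamma> t \<noteq> a\<close> by (simp add: rho_def)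
  then have "0 < t * r'" using growth by linarith
  then have "r' > 0" using \<open>t > 0\<close> by (simp add: zero_less_mult_iff)
  have "c * (\<bar>\<mu>\<bar> * rho a (\<gamma> t)) = \<bar>\<mu>\<bar> * (c * rho a (\<gamma> t))"
    by (simp add: mult.left_commute)
  also have "\<dots> \<le> \<bar>\<mu>\<bar> * (t * r')"
    using growth by (rule mult_left_mono) simp
  also have "\<dots> = \<bar>t * h'\<bar>"
    using \<open>r' > 0\<close> \<open>t > 0\<close> \<open>h' = \<mu> * r'\<close> by (simp add: abs_mult)
  finally have "\<bar>\<mu>\<bar> * rho a (\<gamma> t) \<le> \<bar>t * h'\<bar> / c"
    using \<open>c > 0\<close> by (simp add: field_simps)
  then have "2 * (1 + norm a) * (\<bar>\<mu>\<bar> * rho a (\<gamma> t)) \<le> 2 * (1 + norm a) * (\<bar>t * h'\<bar> / c)"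
    by (intro mult_left_mono) auto
  then show "\<bar>partial f i (\<gamma> t)\<bar> \<le> 2 * (1 + norm a) * (\<bar>t * h'\<bar> / c)"
    and "\<bar>\<gamma> t $ j * partial f i (\<gamma> t)\<bar> \<le> 2 * (1 + norm a) * (\<bar>t * h'\<bar> / c)"
    using partial_bounds_of_proportional_derivative[OF f' \<mu> far] by (meson order_trans)+
qed

text \<open>Along the branch \<open>(f \<circ> \<gamma>)' = \<mu> (\<rho>\<^sub>a \<circ> \<gamma>)'\<close>. Since \<open>t (f \<circ> \<gamma>)' \<rightarrow> 0\<close> while
  \<open>t (\<rho>\<^sub>a \<circ> \<gamma>)' \<ge> c \<rho>\<^sub>a \<circ> \<gamma>\<close>, the quantity \<open>\<bar>\<mu>\<bar> \<rho>\<^sub>a(\<gamma> t)\<close>, which dominates the gradient terms,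
  tends to \<open>0\<close>.\<close>
lemma milnor_branch_gradient_tendsto_zero:
  fixes f :: "real^'n \<Rightarrow> real" and \<gamma> :: "real \<Rightarrow> real^'n"
  assumes differentiable: "\<And>x. f differentiable (at x)"
    and branch: "\<And>j. laurent_at_top (\<lambda>t. \<gamma> t $ j)"
    and laurent_f: "laurent_at_top (\<lambda>t. f (\<gamma> t))"
    and milnor: "eventually (\<lambda>t. \<gamma> t \<in> milnor_set f a) at_top"
    and unbounded: "filterlim (\<lambda>t. norm (\<gamma> t)) at_top at_top"
    and limit: "((\<lambda>t. f (\<gamma> t)) \<longlongrightarrow> L) at_top"
  shows "((\<lambda>t. partial f i (\<gamma> t)) \<longlongrightarrow> 0) at_top"
    and "((\<lambda>t. \<gamma> t $ j * partial f i (\<gamma> t)) \<longlongrightarrow> 0) at_top"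
proof -
  have f': "(f has_derivative frechet_derivative f (at x)) (at x)" for x
    using differentiable frechet_derivative_works by blast
  obtain \<gamma>' where \<gamma>': "eventually (\<lambda>t. (\<gamma> has_vector_derivative \<gamma>' t) (at t)) at_top"
    using laurent_at_top_has_vector_derivative[OF branch] by blast
  obtain h' where h': "eventually (\<lambda>t. ((\<lambda>t. f (\<gamma> t)) has_real_derivative h' t) (at t)) at_top"
    and "\<And>L. ((\<lambda>t. f (\<gamma> t)) \<longlongrightarrow> L) at_top \<Longrightarrow> ((\<lambda>t. t * h' t) \<longlongrightarrow> 0) at_top"
    using laurent_at_top_derivative[OF laurent_f] by blast
  with limit have t_h': "((\<lambda>t. t * h' t) \<longlongrightarrow> 0) at_top" by blast
  have far: "filterlim (\<lambda>t. norm (\<gamma> t - a)) at_top at_top"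
    by (rule filterlim_norm_minus_const_at_top[OF unbounded])
  have laurent_rho: "laurent_at_top (\<lambda>t. rho a (\<gamma> t))"
    unfolding rho_eq_sum
    by (intro laurent_at_top_sum laurent_at_top_power laurent_at_top_diff branch laurent_at_top_const)
  obtain r' where r': "eventually (\<lambda>t. ((\<lambda>t. rho a (\<gamma> t)) has_real_derivative r' t) (at t)) at_top"
    and "filterlim (\<lambda>t. rho a (\<gamma> t)) at_top at_top \<Longrightarrow>
      \<exists>c>0. eventually (\<lambda>t. c * rho a (\<gamma> t) \<le> t * r' t) at_top"
    by (rule laurent_at_top_derivative[OF laurent_rho]) blast
  moreover have "filterlim (\<lambda>t. rho a (\<gamma> t)) at_top at_top"
    unfolding rho_def by (rule filterlim_pow_at_top[OF _ far]) simp
  ultimately obtain c where "c > 0" and t_r': "eventually (\<lambda>t. c * rho a (\<gamma> t) \<le> t * r' t) at_top"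
    by blast
  define W where "W t = 2 * (1 + norm a) * (\<bar>t * h' t\<bar> / c)" for t
  have W: "(W \<longlongrightarrow> 0) at_top"
    unfolding W_def using tendsto_mult_right_zero[OF tendsto_divide_zero[OF tendsto_rabs_zero[OF t_h']]]
    by simp
  have "eventually (\<lambda>t. \<bar>partial f i (\<gamma> t)\<bar> \<le> W t \<and> \<bar>\<gamma> t $ j * partial f i (\<gamma> t)\<bar> \<le> W t) at_top"
    using \<gamma>' h' r' milnor far[unfolded filterlim_at_top, rule_format, of 1] eventually_gt_at_top[of 0] t_r'
  proof eventually_elim
    case (elim t)
    show ?case
      unfolding W_def using milnor_branch_partial_bounds[OF f' elim(1-6) \<open>c > 0\<close> elim(7)] by blast
  qed
  then have "eventually (\<lambda>t. norm (partial f i (\<gamma> t)) \<le> W t) at_top"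
    and "eventually (\<lambda>t. norm (\<gamma> t $ j * partial f i (\<gamma> t)) \<le> W t) at_top"
    by (auto elim: eventually_mono)
  then show "((\<lambda>t. partial f i (\<gamma> t)) \<longlongrightarrow> 0) at_top"
    and "((\<lambda>t. \<gamma> t $ j * partial f i (\<gamma> t)) \<longlongrightarrow> 0) at_top"
    by (auto intro: Lim_null_comparison[OF _ W])
qed

section \<open>Polynomials along close curves\<close>

definition monomial :: "('n \<Rightarrow> nat) \<Rightarrow> real^'n \<Rightarrow> real" where
  "monomial \<alpha> x = (\<Prod>i\<in>UNIV. x $ i ^ \<alpha> i)"

definition total_degree :: "('n \<Rightarrow> nat) \<Rightarrow> nat" where
  "total_degree \<alpha> = (\<Sum>i\<in>UNIV. \<alpha> i)"

lemma monomial_fun_upd: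
  fixes \<alpha> :: "'n::finite \<Rightarrow> nat"
  shows "monomial (\<alpha>(i := m)) x = x $ i ^ m * (\<Prod>j\<in>UNIV - {i}. x $ j ^ \<alpha> j)"
  unfolding monomial_def by (subst prod.remove[of UNIV i]) (auto intro!: prod.cong)

lemma monomial_raise_exponent:
  fixes \<alpha> :: "'n::finite \<Rightarrow> nat"
  shows "monomial (\<alpha>(j := Suc (\<alpha> j))) x = x $ j * monomial \<alpha> x"
  using monomial_fun_upd[of \<alpha> j "Suc (\<alpha> j)" x] monomial_fun_upd[of \<alpha> j "\<alpha> j" x] by simp

lemma total_degree_raise_exponent:
  fixes \<alpha> :: "'n::finite \<Rightarrow> nat"
  shows "total_degree (\<alpha>(j := Suc (\<alpha> j))) = Suc (total_degree \<alpha>)"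
  unfolding total_degree_def
  by (simp add: sum.remove[of UNIV j] sum.cong[of "UNIV - {j}" _ "\<alpha>(j := Suc (\<alpha> j))" \<alpha>])

lemma total_degree_lower_exponent:
  fixes \<alpha> :: "'n::finite \<Rightarrow> nat"
  assumes "\<alpha> i > 0"
  shows "Suc (total_degree (\<alpha>(i := \<alpha> i - 1))) = total_degree \<alpha>"
  using total_degree_raise_exponent[of "\<alpha>(i := \<alpha> i - 1)" i] assms by simp

lemma has_derivative_monomial:
  fixes \<alpha> :: "'n::finite \<Rightarrow> nat"
  shows "(monomial \<alpha> has_derivative
           (\<lambda>v. \<Sum>i\<in>UNIV. v $ i * (real (\<alpha> i) * monomial (\<alpha>(i := \<alpha> i - 1)) x))) (at x)"
proof -
  have "(monomial \<alpha> has_derivative (\<lambda>v. \<Sum>i\<in>UNIV. (of_nat (\<alpha> i) * v $ i * x $ i ^ (\<alpha> i - 1)) *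
          (\<Prod>j\<in>UNIV - {i}. x $ j ^ \<alpha> j))) (at x)"
    unfolding monomial_def
    by (intro has_derivative_prod has_derivative_power bounded_linear_imp_has_derivative
        bounded_linear_vec_nth)
  then show ?thesis
    by (simp add: monomial_fun_upd mult_ac)
qed

lemma poly_fun_of_degreeE:
  fixes f :: "real^'n \<Rightarrow> real"
  assumes "poly_fun_of_degree f d"
  obtains A c where "f = (\<lambda>x. \<Sum>\<alpha>\<in>A. c \<alpha> * monomial \<alpha> x)"
    "\<And>\<alpha>. \<alpha> \<in> A \<Longrightarrow> total_degree \<alpha> \<le> d"
proof -
  from assms obtain c where "\<And>x. f x = (\<Sum>\<alpha> | c \<alpha> \<noteq> 0. c \<alpha> * monomial \<alpha> x)"
    and "\<And>\<alpha>. c \<alpha> \<noteq> 0 \<Longrightarrow> total_degree \<alpha> \<le> d"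
    unfolding poly_fun_of_degree_def monomial_def total_degree_def by blast
  then show thesis
    by (intro that[where A = "{\<alpha>. c \<alpha> \<noteq> 0}" and c = c]) (auto simp: fun_eq_iff)
qed

lemma has_derivative_polynomial:
  fixes c :: "('n::finite \<Rightarrow> nat) \<Rightarrow> real"
  shows "((\<lambda>x. \<Sum>\<alpha>\<in>A. c \<alpha> * monomial \<alpha> x) has_derivative
     (\<lambda>v. \<Sum>\<alpha>\<in>A. c \<alpha> * (\<Sum>i\<in>UNIV. v $ i * (real (\<alpha> i) * monomial (\<alpha>(i := \<alpha> i - 1)) x)))) (at x)"
  by (intro has_derivative_sum has_derivative_mult_right has_derivative_monomial)

lemma partial_polynomial:
  fixes c :: "('n::finite \<Rightarrow> nat) \<Rightarrow> real"
  assumes "f = (\<lambda>x. \<Sum>\<alpha>\<in>A. c \<alpha> * monomial \<alpha> x)"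
  shows "partial f i x = (\<Sum>\<alpha>\<in>A. c \<alpha> * real (\<alpha> i) * monomial (\<alpha>(i := \<alpha> i - 1)) x)"
  unfolding assms
  by (simp add: partial_eq_has_derivative[OF has_derivative_polynomial] axis_def
      if_distrib[of "\<lambda>y. y * _"] sum.delta mult.assoc cong: if_cong)

lemma laurent_at_top_polynomial:
  fixes \<gamma> :: "real \<Rightarrow> real^'n"
  assumes "\<And>j. laurent_at_top (\<lambda>t. \<gamma> t $ j)"
  shows "laurent_at_top (\<lambda>t. \<Sum>\<alpha>\<in>A. c \<alpha> * monomial \<alpha> (\<gamma> t))"
  unfolding monomial_def
  by (intro laurent_at_top_sum laurent_at_top_mult laurent_at_top_const laurent_at_top_prod
      laurent_at_top_power assms)

lemma abs_prod_le_power: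
  fixes b :: "'i \<Rightarrow> real"
  assumes "\<And>i. i \<in> S \<Longrightarrow> \<bar>b i\<bar> \<le> B"
  shows "\<bar>prod b S\<bar> \<le> B ^ card S"
proof -
  have "prod (\<lambda>i. \<bar>b i\<bar>) S \<le> prod (\<lambda>_. B) S"
    by (rule prod_mono) (use assms in auto)
  then show ?thesis by (simp add: abs_prod)
qed

lemma abs_prod_diff_le:
  fixes a b :: "'i \<Rightarrow> real"
  assumes "finite S" "B \<ge> 0"
    and "\<And>i. i \<in> S \<Longrightarrow> \<bar>a i\<bar> \<le> B" "\<And>i. i \<in> S \<Longrightarrow> \<bar>b i\<bar> \<le> B"
    and "\<And>i. i \<in> S \<Longrightarrow> \<bar>a i - b i\<bar> \<le> \<delta>"
  shows "\<bar>prod a S - prod b S\<bar> \<le> real (card S) * \<delta> * B ^ (card S - 1)"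
  using assms(1,3-5)
proof (induction S rule: finite_induct)
  case empty
  then show ?case by simp
next
  case (insert x S)
  have IH: "\<bar>prod a S - prod b S\<bar> \<le> real (card S) * \<delta> * B ^ (card S - 1)"
    using insert by auto
  have ax: "\<bar>a x\<bar> \<le> B" and dx: "\<bar>a x - b x\<bar> \<le> \<delta>" using insert by auto
  have pb: "\<bar>prod b S\<bar> \<le> B ^ card S"
    using insert.prems(2) by (intro abs_prod_le_power) auto
  have "prod a (insert x S) - prod b (insert x S) = a x * (prod a S - prod b S) + (a x - b x) * prod b S"
    using insert.hyps by (simp add: algebra_simps)
  then have "\<bar>prod a (insert x S) - prod b (insert x S)\<bar>
      \<le> \<bar>a x\<bar> * \<bar>prod a S - prod b S\<bar> + \<bar>a x - b x\<bar> * \<bar>prod b S\<bar>"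
    by (metis abs_mult abs_triangle_ineq)
  also have "\<dots> \<le> B * (real (card S) * \<delta> * B ^ (card S - 1)) + \<delta> * B ^ card S"
    using assms(2) dx by (intro add_mono mult_mono ax IH dx pb) auto
  also have "B * (real (card S) * \<delta> * B ^ (card S - 1)) = real (card S) * \<delta> * B ^ card S"
    by (cases "card S") auto
  also have "real (card S) * \<delta> * B ^ card S + \<delta> * B ^ card S
      = real (card (insert x S)) * \<delta> * B ^ (card (insert x S) - 1)"
    using insert.hyps by (simp add: algebra_simps)
  finally show ?case .
qed

text \<open>One factor per unit of degree: this reduces Lipschitz bounds for monomials to those for
  products.\<close>
lemma monomial_eq_prod_Sigma:
  fixes \<beta> :: "'n::finite \<Rightarrow> nat"
  shows "monomial \<beta> x = (\<Prod>p\<in>Sigma UNIV (\<lambda>i. {..<\<beta> i}). x $ fst p)"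
  unfolding monomial_def using prod.Sigma[of UNIV "\<lambda>i. {..<\<beta> i}" "\<lambda>i k. x $ i"]
  by (simp add: split_def)

lemma card_Sigma_exponents:
  "card (Sigma (UNIV::'n::finite set) (\<lambda>i. {..<\<beta> i})) = total_degree \<beta>"
  by (subst card_SigmaI) (auto simp: total_degree_def)

lemma abs_monomial_diff_le:
  fixes \<beta> :: "'n::finite \<Rightarrow> nat"
  assumes "B \<ge> 0" "\<And>i. \<bar>x $ i\<bar> \<le> B" "\<And>i. \<bar>y $ i\<bar> \<le> B" "\<And>i. \<bar>x $ i - y $ i\<bar> \<le> \<delta>"
  shows "\<bar>monomial \<beta> x - monomial \<beta> y\<bar> \<le> real (total_degree \<beta>) * \<delta> * B ^ (total_degree \<beta> - 1)"
  unfolding monomial_eq_prod_Sigma card_Sigma_exponents[symmetric]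
  by (rule abs_prod_diff_le) (use assms in auto)

lemma abs_monomial_sum_diff_le:
  fixes x y :: "real^'n::finite" and \<beta> :: "'k \<Rightarrow> 'n \<Rightarrow> nat"
  assumes "1 \<le> B" "\<And>j. \<bar>x $ j\<bar> \<le> B" "\<And>j. \<bar>y $ j\<bar> \<le> B" and \<delta>: "\<And>j. \<bar>x $ j - y $ j\<bar> \<le> \<delta>"
    and deg: "\<And>k. k \<in> K \<Longrightarrow> c k \<noteq> 0 \<Longrightarrow> total_degree (\<beta> k) \<le> d"
  shows "\<bar>\<Sum>k\<in>K. c k * (monomial (\<beta> k) x - monomial (\<beta> k) y)\<bar>
           \<le> (\<Sum>k\<in>K. \<bar>c k\<bar>) * (real d * \<delta> * B ^ (d - 1))"
proof -
  have "\<bar>monomial (\<beta> k) x - monomial (\<beta> k) y\<bar> \<le> real d * \<delta> * B ^ (d - 1)"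
    if "k \<in> K" "c k \<noteq> 0" for k
  proof -
    have "\<bar>monomial (\<beta> k) x - monomial (\<beta> k) y\<bar>
        \<le> real (total_degree (\<beta> k)) * \<delta> * B ^ (total_degree (\<beta> k) - 1)"
      using assms by (intro abs_monomial_diff_le) auto
    also have "\<dots> \<le> real d * \<delta> * B ^ (d - 1)"
      using deg[OF that] assms(1) abs_ge_zero[THEN order_trans, OF \<delta>]
      by (intro mult_mono power_increasing) auto
    finally show ?thesis .
  qed
  then have "\<bar>c k\<bar> * \<bar>monomial (\<beta> k) x - monomial (\<beta> k) y\<bar> \<le> \<bar>c k\<bar> * (real d * \<delta> * B ^ (d - 1))"
    if "k \<in> K" for k
    using that by (cases "c k = 0") (simp_all add: mult_left_mono)
  then have "(\<Sum>k\<in>K. \<bar>c k\<bar> * \<bar>monomial (\<beta> k) x - monomial (\<beta> k) y\<bar>)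
      \<le> (\<Sum>k\<in>K. \<bar>c k\<bar> * (real d * \<delta> * B ^ (d - 1)))"
    by (rule sum_mono)
  then show ?thesis
    using sum_abs[of "\<lambda>k. c k * (monomial (\<beta> k) x - monomial (\<beta> k) y)" K]
    by (simp add: abs_mult sum_distrib_right)
qed

text \<open>If the points have size \<open>O(t^D)\<close> and differ by \<open>O(t^-((d-1)D+1))\<close>, then a monomial of
  degree at most \<open>d\<close> changes by \<open>O(t^((d-1)D) \<cdot> t^-((d-1)D+1)) = O(1/t)\<close>.\<close>
lemma monomial_sum_diff_tendsto_zero:
  fixes x y :: "real \<Rightarrow> real^'n" and \<beta> :: "'k \<Rightarrow> 'n \<Rightarrow> nat" and c :: "'k \<Rightarrow> real"
  assumes deg: "\<And>k. k \<in> K \<Longrightarrow> c k \<noteq> 0 \<Longrightarrow> total_degree (\<beta> k) \<le> d"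
    and close: "eventually (\<lambda>t. \<forall>j. \<bar>x t $ j\<bar> \<le> C * t ^ D \<and>
                   \<bar>x t $ j - y t $ j\<bar> \<le> C / t ^ ((d - 1) * D + 1)) at_top"
  shows "((\<lambda>t. \<Sum>k\<in>K. c k * (monomial (\<beta> k) (x t) - monomial (\<beta> k) (y t))) \<longlongrightarrow> 0) at_top"
proof (rule Lim_null_comparison)
  define E where "E = 2 * (\<bar>C\<bar> + 1)"
  define S where "S = (\<Sum>k\<in>K. \<bar>c k\<bar>)"
  show "((\<lambda>t. S * (real d * \<bar>C\<bar> * E ^ (d - 1)) * inverse t) \<longlongrightarrow> 0) at_top"
    using tendsto_mult_right_zero[OF tendsto_inverse_0_at_top[OF filterlim_ident]] by simp
  show "eventually (\<lambda>t. norm (\<Sum>k\<in>K. c k * (monomial (\<beta> k) (x t) - monomial (\<beta> k) (y t)))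
      \<le> S * (real d * \<bar>C\<bar> * E ^ (d - 1)) * inverse t) at_top"
    using close eventually_ge_at_top[of 1]
  proof eventually_elim
    case (elim t)
    define B where "B = E * t ^ D"
    define \<delta> where "\<delta> = \<bar>C\<bar> / t ^ ((d - 1) * D + 1)"
    have "1 \<le> t ^ D" using elim(2) by simp
    moreover have "\<bar>C\<bar> \<le> \<bar>C\<bar> * t ^ D"
      using calculation mult_left_mono[of 1 "t ^ D" "\<bar>C\<bar>"] by simp
    ultimately have B: "1 \<le> B" "\<bar>C\<bar> * t ^ D + \<bar>C\<bar> \<le> B"
      by (auto simp: B_def E_def algebra_simps)
    have "\<bar>C\<bar> / u \<le> \<bar>C\<bar>" if "1 \<le> u" for u :: real
      using that by (simp add: divide_le_eq mult_le_cancel_left1)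
    then have "\<bar>C\<bar> / t ^ ((d - 1) * D + 1) \<le> \<bar>C\<bar>"
      using elim(2) one_le_power by blast
    have bounds: "\<bar>x t $ j\<bar> \<le> B" "\<bar>y t $ j\<bar> \<le> B" "\<bar>x t $ j - y t $ j\<bar> \<le> \<delta>" for j
    proof -
      have "C * t ^ D \<le> \<bar>C\<bar> * t ^ D" and "C / t ^ ((d - 1) * D + 1) \<le> \<delta>"
        using elim(2) unfolding \<delta>_def by (auto intro: mult_right_mono divide_right_mono)
      moreover have "\<bar>x t $ j\<bar> \<le> C * t ^ D" "\<bar>x t $ j - y t $ j\<bar> \<le> C / t ^ ((d - 1) * D + 1)"
        using elim(1) by auto
      ultimately show "\<bar>x t $ j\<bar> \<le> B" "\<bar>y t $ j\<bar> \<le> B" "\<bar>x t $ j - y t $ j\<bar> \<le> \<delta>"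
        using B \<open>\<bar>C\<bar> / _ \<le> \<bar>C\<bar>\<close> unfolding \<delta>_def by linarith+
    qed
    have "B ^ (d - 1) = E ^ (d - 1) * t ^ ((d - 1) * D)"
      unfolding B_def by (simp add: power_mult_distrib power_mult[symmetric] mult.commute)
    moreover have "t ^ ((d - 1) * D + 1) = t ^ ((d - 1) * D) * t"
      by simp
    ultimately have "\<delta> * B ^ (d - 1) = \<bar>C\<bar> * E ^ (d - 1) * inverse t"
      using elim(2) unfolding \<delta>_def by (simp add: divide_inverse)
    with abs_monomial_sum_diff_le[OF B(1) bounds deg, of K c] show ?case
      by (simp add: S_def mult.assoc)
  qed
qed

lemma close_curves_norm_diff_tendsto_zero:
  fixes x y :: "real \<Rightarrow> real^'n"
  assumes "eventually (\<lambda>t. \<forall>j. \<bar>x t $ j - y t $ j\<bar> \<le> C / t ^ (m + 1)) at_top"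
  shows "((\<lambda>t. norm (x t - y t)) \<longlongrightarrow> 0) at_top"
proof -
  have "((\<lambda>t. x t $ j - y t $ j) \<longlongrightarrow> 0) at_top" for j
  proof (rule Lim_null_comparison)
    show "eventually (\<lambda>t. norm (x t $ j - y t $ j) \<le> \<bar>C\<bar> * inverse t) at_top"
      using assms eventually_ge_at_top[of 1]
    proof eventually_elim
      case (elim t)
      have "t \<le> t ^ (m + 1)"
        using elim(2) mult_left_mono[OF one_le_power[of t m], of t] by simp
      then have "C / t ^ (m + 1) \<le> \<bar>C\<bar> / t"
        using elim(2) by (intro order_trans[OF divide_right_mono divide_left_mono]) auto
      then show ?case
        using elim(1) by (auto simp: divide_inverse intro: order_trans)
    qed
    show "((\<lambda>t. \<bar>C\<bar> * inverse t) \<longlongrightarrow> 0) at_top"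
      using tendsto_mult_right_zero[OF tendsto_inverse_0_at_top[OF filterlim_ident]] by simp
  qed
  then have "((\<lambda>t. x t - y t) \<longlongrightarrow> 0) at_top"
    by (intro vec_tendstoI) simp
  then show ?thesis
    by (rule tendsto_norm_zero)
qed

lemma close_curves_polynomial_diffs_tendsto_zero:
  fixes f :: "real^'n \<Rightarrow> real" and x y :: "real \<Rightarrow> real^'n"
  assumes f: "f = (\<lambda>z. \<Sum>\<alpha>\<in>A. c \<alpha> * monomial \<alpha> z)"
    and deg: "\<And>\<alpha>. \<alpha> \<in> A \<Longrightarrow> total_degree \<alpha> \<le> d"
    and close: "eventually (\<lambda>t. \<forall>j. \<bar>x t $ j\<bar> \<le> C * t ^ D \<and>
                   \<bar>x t $ j - y t $ j\<bar> \<le> C / t ^ ((d - 1) * D + 1)) at_top"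
  shows "((\<lambda>t. f (x t) - f (y t)) \<longlongrightarrow> 0) at_top"
    and "((\<lambda>t. partial f i (x t) - partial f i (y t)) \<longlongrightarrow> 0) at_top"
    and "((\<lambda>t. x t $ j * partial f i (x t) - y t $ j * partial f i (y t)) \<longlongrightarrow> 0) at_top"
    and "((\<lambda>t. norm (x t - y t)) \<longlongrightarrow> 0) at_top"
proof -
  define lower where "lower \<alpha> = \<alpha>(i := \<alpha> i - 1)" for \<alpha> :: "'n \<Rightarrow> nat"
  define raise where "raise \<alpha> = (lower \<alpha>)(j := Suc (lower \<alpha> j))" for \<alpha>
  have deg_lower_Suc: "Suc (total_degree (lower \<alpha>)) \<le> d"
    if "\<alpha> \<in> A" "c \<alpha> * real (\<alpha> i) \<noteq> 0" for \<alpha>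
    using total_degree_lower_exponent[of \<alpha> i] deg[OF that(1)] that(2) by (simp add: lower_def)
  then have deg_lower: "total_degree (lower \<alpha>) \<le> d"
    and deg_raise: "total_degree (raise \<alpha>) \<le> d"
    if "\<alpha> \<in> A" "c \<alpha> * real (\<alpha> i) \<noteq> 0" for \<alpha>
    using that by (simp_all only: raise_def total_degree_raise_exponent Suc_le_eq)
      (blast intro: less_imp_le)+
  have partial: "partial f i z = (\<Sum>\<alpha>\<in>A. c \<alpha> * real (\<alpha> i) * monomial (lower \<alpha>) z)" for z
    unfolding lower_def by (rule partial_polynomial[OF f])
  have "((\<lambda>t. \<Sum>\<alpha>\<in>A. c \<alpha> * (monomial \<alpha> (x t) - monomial \<alpha> (y t))) \<longlongrightarrow> 0) at_top"
    using deg close by (rule monomial_sum_diff_tendsto_zero)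
  then show "((\<lambda>t. f (x t) - f (y t)) \<longlongrightarrow> 0) at_top"
    by (simp add: f algebra_simps sum_subtractf)
  have "((\<lambda>t. \<Sum>\<alpha>\<in>A. c \<alpha> * real (\<alpha> i) * (monomial (lower \<alpha>) (x t) - monomial (lower \<alpha>) (y t)))
      \<longlongrightarrow> 0) at_top"
    using deg_lower close by (rule monomial_sum_diff_tendsto_zero)
  then show "((\<lambda>t. partial f i (x t) - partial f i (y t)) \<longlongrightarrow> 0) at_top"
    by (simp add: partial algebra_simps sum_subtractf)
  have "((\<lambda>t. \<Sum>\<alpha>\<in>A. c \<alpha> * real (\<alpha> i) * (monomial (raise \<alpha>) (x t) - monomial (raise \<alpha>) (y t)))
      \<longlongrightarrow> 0) at_top"
    using deg_raise close by (rule monomial_sum_diff_tendsto_zero)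
  then show "((\<lambda>t. x t $ j * partial f i (x t) - y t $ j * partial f i (y t)) \<longlongrightarrow> 0) at_top"
    by (simp add: partial raise_def monomial_raise_exponent algebra_simps sum_subtractf sum_distrib_left)
  show "((\<lambda>t. norm (x t - y t)) \<longlongrightarrow> 0) at_top"
    using close by (intro close_curves_norm_diff_tendsto_zero) (auto elim: eventually_mono)
qed

section \<open>Truncated Laurent series\<close>

lemma eval_fps_split_initial_segment:
  fixes F :: "real fps"
  assumes "norm z < fps_conv_radius F"
  shows "eval_fps F z = (\<Sum>k<M. fps_nth F k * z ^ k) + z ^ M * eval_fps (fps_shift M F) z"
proof -
  have summable: "summable (\<lambda>k. fps_nth F k * z ^ k)"
    using assms by (rule summable_fps)
  have "(\<lambda>n. fps_nth F (n + M) * z ^ (n + M)) = (\<lambda>n. z ^ M * (fps_nth (fps_shift M F) n * z ^ n))"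
    by (simp add: power_add fun_eq_iff)
  moreover have "summable (\<lambda>n. fps_nth (fps_shift M F) n * z ^ n)"
    using assms by (intro summable_fps) simp
  ultimately have "(\<Sum>n. fps_nth F (n + M) * z ^ (n + M)) = z ^ M * eval_fps (fps_shift M F) z"
    by (simp add: eval_fps_def suminf_mult)
  then show ?thesis
    using suminf_split_initial_segment[OF summable, of M] by (simp add: eval_fps_def)
qed

lemma eventually_abs_le_at_top:
  fixes g :: "real \<Rightarrow> real"
  assumes "(g \<longlongrightarrow> l) at_top"
  shows "eventually (\<lambda>t. \<bar>g t\<bar> \<le> \<bar>l\<bar> + 1) at_top"
  using order_tendstoD(2)[OF tendsto_rabs[OF assms], of "\<bar>l\<bar> + 1"] by (auto elim: eventually_mono)

text \<open>The tail of \<open>t^D \<cdot> F(1/t)\<close> after the monomials \<open>t^D, \<dots>, t^(D-M+1)\<close> is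
  \<open>t^(D-M) \<cdot> (fps_shift M F)(1/t)\<close>, and the shifted series is bounded near \<open>0\<close>.\<close>
lemma laurent_truncation_bound:
  fixes F :: "'j::finite \<Rightarrow> real fps"
  assumes radius: "\<And>j. fps_conv_radius (F j) > 0" and "D \<le> M"
  obtains C where "eventually (\<lambda>t. \<forall>j. \<bar>t ^ D * eval_fps (F j) (inverse t)\<bar> \<le> C * t ^ D \<and>
      \<bar>t ^ D * eval_fps (F j) (inverse t) - t ^ D * (\<Sum>k<M. fps_nth (F j) k * inverse t ^ k)\<bar>
        \<le> C / t ^ (M - D)) at_top"
proof -
  define E where "E j = fps_shift M (F j)" for j
  define C where "C = (\<Sum>j\<in>UNIV. \<bar>eval_fps (F j) 0\<bar> + \<bar>eval_fps (E j) 0\<bar> + 2)"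
  have C: "\<bar>eval_fps (F j) 0\<bar> + 1 \<le> C" "\<bar>eval_fps (E j) 0\<bar> + 1 \<le> C" for j
    using member_le_sum[of j UNIV "\<lambda>j. \<bar>eval_fps (F j) 0\<bar> + \<bar>eval_fps (E j) 0\<bar> + 2"]
    by (auto simp: C_def)
  have "eventually (\<lambda>t. \<bar>eval_fps (F j) (inverse t)\<bar> \<le> C \<and> \<bar>eval_fps (E j) (inverse t)\<bar> \<le> C \<and>
      norm (inverse t) < fps_conv_radius (F j)) at_top" for j
  proof -
    have "fps_conv_radius (E j) > 0" using radius by (simp add: E_def)
    show ?thesis
      using eventually_abs_le_at_top[OF tendsto_eval_fps_inverse[OF radius[of j]]]
        eventually_abs_le_at_top[OF tendsto_eval_fps_inverse[OF \<open>fps_conv_radius (E j) > 0\<close>]]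
        eventually_has_fps_expansion_inverse[OF eval_fps_has_fps_expansion[OF radius[of j]]]
      by eventually_elim (use C[of j] in \<open>blast intro: order_trans\<close>)
  qed
  then have "eventually (\<lambda>t. \<forall>j. \<bar>eval_fps (F j) (inverse t)\<bar> \<le> C \<and>
      \<bar>eval_fps (E j) (inverse t)\<bar> \<le> C \<and> norm (inverse t) < fps_conv_radius (F j)) at_top"
    by (rule eventually_all_finite)
  then have "eventually (\<lambda>t. t > 0 \<and> (\<forall>j. \<bar>eval_fps (F j) (inverse t)\<bar> \<le> C \<and>
      \<bar>eval_fps (E j) (inverse t)\<bar> \<le> C \<and> norm (inverse t) < fps_conv_radius (F j))) at_top"
    by (rule eventually_conj[OF eventually_gt_at_top])
  then show thesis
  proof (rule that[OF eventually_mono], safe)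
    fix t j assume "t > 0" and bounds: "\<forall>j. \<bar>eval_fps (F j) (inverse t)\<bar> \<le> C \<and>
      \<bar>eval_fps (E j) (inverse t)\<bar> \<le> C \<and> norm (inverse t) < fps_conv_radius (F j)"
    show "\<bar>t ^ D * eval_fps (F j) (inverse t)\<bar> \<le> C * t ^ D"
      using bounds \<open>t > 0\<close> by (simp add: abs_mult mult.commute mult_left_mono)
    have "t ^ D * inverse t ^ M = inverse (t ^ (M - D))"
      using \<open>t > 0\<close> \<open>D \<le> M\<close> by (simp add: power_diff field_simps)
    then have "t ^ D * eval_fps (F j) (inverse t) - t ^ D * (\<Sum>k<M. fps_nth (F j) k * inverse t ^ k)
        = eval_fps (E j) (inverse t) / t ^ (M - D)"
      using eval_fps_split_initial_segment[of "inverse t" "F j" M] bounds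
      by (simp add: E_def algebra_simps divide_inverse)
    then show "\<bar>t ^ D * eval_fps (F j) (inverse t) - t ^ D * (\<Sum>k<M. fps_nth (F j) k * inverse t ^ k)\<bar>
        \<le> C / t ^ (M - D)"
      using bounds \<open>t > 0\<close> by (simp add: divide_right_mono)
  qed
qed

lemma powi_diff_of_nat:
  fixes t :: real
  assumes "t \<noteq> 0"
  shows "t powi (int D - int k) = t ^ D * inverse t ^ k"
  using assms by (simp add: power_int_diff power_int_minus divide_inverse power_inverse)

lemma laurent_series_component:
  fixes coef :: "int \<Rightarrow> real^'n"
  assumes "summable (\<lambda>k. t powi (int D - int k) *\<^sub>R coef (int D - int k))" "t \<noteq> 0"
  shows "summable (\<lambda>k. coef (int D - int k) $ j * inverse t ^ k)"
    and "(\<Sum>k. t powi (int D - int k) *\<^sub>R coef (int D - int k)) $ j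
           = t ^ D * (\<Sum>k. coef (int D - int k) $ j * inverse t ^ k)"
proof -
  have component: "(t powi (int D - int k) *\<^sub>R coef (int D - int k)) $ j
      = t ^ D * (coef (int D - int k) $ j * inverse t ^ k)" for k
    using assms(2) by (simp add: powi_diff_of_nat)
  have "summable (\<lambda>k. (t powi (int D - int k) *\<^sub>R coef (int D - int k)) $ j)"
    by (rule bounded_linear.summable[OF bounded_linear_vec_nth assms(1)])
  then have "summable (\<lambda>k. t ^ D * (coef (int D - int k) $ j * inverse t ^ k))"
    unfolding component .
  then show summable: "summable (\<lambda>k. coef (int D - int k) $ j * inverse t ^ k)"
    using assms(2) by (simp add: summable_cmult_iff)
  have "(\<Sum>k. t powi (int D - int k) *\<^sub>R coef (int D - int k)) $ j
      = (\<Sum>k. (t powi (int D - int k) *\<^sub>R coef (int D - int k)) $ j)"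
    using bounded_linear.suminf[OF bounded_linear_vec_nth assms(1)] by simp
  also have "\<dots> = t ^ D * (\<Sum>k. coef (int D - int k) $ j * inverse t ^ k)"
    unfolding component by (rule suminf_mult[OF summable])
  finally show "(\<Sum>k. t powi (int D - int k) *\<^sub>R coef (int D - int k)) $ j
      = t ^ D * (\<Sum>k. coef (int D - int k) $ j * inverse t ^ k)" .
qed

lemma truncated_laurent_component:
  fixes coef :: "int \<Rightarrow> real^'n"
  assumes "t \<noteq> 0"
  shows "(\<Sum>i\<in>{- (int d - 1) * int D .. int D}. t powi i *\<^sub>R coef i) $ j
           = t ^ D * (\<Sum>k<d * D + 1. coef (int D - int k) $ j * inverse t ^ k)"
proof -
  have "(\<Sum>i\<in>{- (int d - 1) * int D .. int D}. t powi i *\<^sub>R coef i) $ j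
      = (\<Sum>i\<in>{- (int d - 1) * int D .. int D}. t powi i * coef i $ j)"
    by simp
  also have "\<dots> = (\<Sum>k<d * D + 1. t powi (int D - int k) * coef (int D - int k) $ j)"
  proof (rule sum.reindex_bij_witness[of _ "\<lambda>k. int D - int k" "\<lambda>i. nat (int D - i)"])
    fix i assume "i \<in> {- (int d - 1) * int D .. int D}"
    then have "int D - int d * int D \<le> i" "i \<le> int D" by (auto simp: algebra_simps)
    then show "int D - int (nat (int D - i)) = i" and "nat (int D - i) \<in> {..<d * D + 1}"
      by (simp_all add: nat_less_iff)
  qed (auto simp: algebra_simps less_Suc_eq_le simp flip: of_nat_mult)
  also have "\<dots> = t ^ D * (\<Sum>k<d * D + 1. coef (int D - int k) $ j * inverse t ^ k)"
    unfolding sum_distrib_left using assms by (intro sum.cong) (simp_all add: powi_diff_of_nat)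
  finally show ?thesis .
qed

lemma laurent_series_curve_truncation:
  fixes coef :: "int \<Rightarrow> real^'n" and \<gamma> \<gamma>h :: "real \<Rightarrow> real^'n"
  assumes conv: "\<And>t. \<bar>t\<bar> > R \<Longrightarrow> summable (\<lambda>k. t powi (int D - int k) *\<^sub>R coef (int D - int k))"
    and \<gamma>: "\<And>t. \<bar>t\<bar> > R \<Longrightarrow> \<gamma> t = (\<Sum>k. t powi (int D - int k) *\<^sub>R coef (int D - int k))"
    and \<gamma>h: "\<And>t. \<gamma>h t = (\<Sum>i\<in>{- (int d - 1) * int D .. int D}. t powi i *\<^sub>R coef i)"
    and "d \<ge> 1"
  obtains C where "\<And>j. laurent_at_top (\<lambda>t. \<gamma> t $ j)"
    and "eventually (\<lambda>t. \<forall>j. \<bar>\<gamma> t $ j\<bar> \<le> C * t ^ D \<and>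
           \<bar>\<gamma> t $ j - \<gamma>h t $ j\<bar> \<le> C / t ^ ((d - 1) * D + 1)) at_top"
proof -
  define P where "P j = Abs_fps (\<lambda>k. coef (int D - int k) $ j)" for j
  define T where "T = max R 0 + 1"
  have series: "summable (\<lambda>k. fps_nth (P j) k * inverse t ^ k) \<and>
      \<gamma> t $ j = t ^ D * eval_fps (P j) (inverse t)" if "t \<ge> T" for t j
    using laurent_series_component[OF conv, of t j] \<gamma>[of t] that
    by (auto simp: T_def P_def eval_fps_def)
  have radius: "fps_conv_radius (P j) > 0" for j
    using conv_radius_geI[of "fps_nth (P j)" "inverse T"] series[of T j]
    by (auto simp: fps_conv_radius_def T_def intro: less_le_trans[of 0 "ereal (inverse T)"])
  have \<gamma>_eq: "eventually (\<lambda>t. \<forall>j. \<gamma> t $ j = t ^ D * eval_fps (P j) (inverse t)) at_top"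
    using eventually_ge_at_top[of T] by eventually_elim (use series in blast)
  have \<gamma>h_eq: "\<gamma>h t $ j = t ^ D * (\<Sum>k<d * D + 1. fps_nth (P j) k * inverse t ^ k)" if "t \<noteq> 0" for t j
    using truncated_laurent_component[OF that] by (simp add: \<gamma>h P_def)
  have "D \<le> d * D + 1" using \<open>d \<ge> 1\<close> by (simp add: le_SucI)
  then obtain C where bound: "eventually (\<lambda>t. \<forall>j. \<bar>t ^ D * eval_fps (P j) (inverse t)\<bar> \<le> C * t ^ D \<and>
      \<bar>t ^ D * eval_fps (P j) (inverse t) - t ^ D * (\<Sum>k<d * D + 1. fps_nth (P j) k * inverse t ^ k)\<bar>
        \<le> C / t ^ (d * D + 1 - D)) at_top"
    by (rule laurent_truncation_bound[OF radius])
  have exponent: "d * D + 1 - D = (d - 1) * D + 1"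
    using \<open>d \<ge> 1\<close> by (cases d) auto
  show thesis
  proof (rule that)
    show "laurent_at_top (\<lambda>t. \<gamma> t $ j)" for j
      by (rule laurent_at_topI[OF eval_fps_has_fps_expansion[OF radius]])
        (use \<gamma>_eq in \<open>auto simp: inverse_eq_divide elim: eventually_mono\<close>)
    show "eventually (\<lambda>t. \<forall>j. \<bar>\<gamma> t $ j\<bar> \<le> C * t ^ D \<and>
        \<bar>\<gamma> t $ j - \<gamma>h t $ j\<bar> \<le> C / t ^ ((d - 1) * D + 1)) at_top"
      using bound[unfolded exponent] \<gamma>_eq eventually_gt_at_top[of 0]
      by eventually_elim (simp add: \<gamma>h_eq)
  qed
qed

theorem proposition3p2:
  fixes f :: "real^'n \<Rightarrow> real" and d :: nat and t0 R :: real and a :: "real^'n"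
    and coef :: "int \<Rightarrow> real^'n" and \<gamma> \<gamma>h :: "real \<Rightarrow> real^'n" and D :: nat
  assumes poly: "poly_fun_of_degree f d"
    and d2: "d \<ge> 2"
    and D_def: "D = d ^ (CARD('n) - 1)"
    and t0: "t0 \<in> S_infty f"
    and coef_top: "\<And>i. i > int D \<Longrightarrow> coef i = 0"
    and conv: "\<And>t. \<bar>t\<bar> > R \<Longrightarrow>
        summable (\<lambda>k. t powi (int D - int k) *\<^sub>R coef (int D - int k))"
    and gamma_def: "\<And>t. \<bar>t\<bar> > R \<Longrightarrow>
        \<gamma> t = (\<Sum>k. t powi (int D - int k) *\<^sub>R coef (int D - int k))"
    and in_milnor: "\<And>t. \<bar>t\<bar> > R \<Longrightarrow> \<gamma> t \<in> milnor_set f a"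
    and branch_at_infinity: "filterlim (\<lambda>t. norm (\<gamma> t)) at_top at_infinity"
    and f_lim: "((\<lambda>t. f (\<gamma> t)) \<longlongrightarrow> t0) at_infinity"
    and gammah_def: "\<And>t. \<gamma>h t = (\<Sum>i\<in>{- (int d - 1) * int D .. int D}. t powi i *\<^sub>R coef i)"
  shows "(filterlim (\<lambda>t. norm (\<gamma>h t)) at_top at_top \<and> filterlim (\<lambda>t. norm (\<gamma> t)) at_top at_top)
    \<and> (((\<lambda>t. f (\<gamma>h t)) \<longlongrightarrow> t0) at_top \<and> ((\<lambda>t. f (\<gamma> t)) \<longlongrightarrow> t0) at_top)
    \<and> (\<forall>i. ((\<lambda>t. partial f i (\<gamma>h t)) \<longlongrightarrow> 0) at_top \<and> ((\<lambda>t. partial f i (\<gamma> t)) \<longlongrightarrow> 0) at_top)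
    \<and> (\<forall>i j. ((\<lambda>t. (\<gamma>h t) $ j * partial f i (\<gamma>h t)) \<longlongrightarrow> 0) at_top
             \<and> ((\<lambda>t. (\<gamma> t) $ j * partial f i (\<gamma> t)) \<longlongrightarrow> 0) at_top)"
proof -
  obtain A c where f: "f = (\<lambda>x. \<Sum>\<alpha>\<in>A. c \<alpha> * monomial \<alpha> x)"
    and deg: "\<And>\<alpha>. \<alpha> \<in> A \<Longrightarrow> total_degree \<alpha> \<le> d"
    using poly_fun_of_degreeE[OF poly] by blast
  obtain C where branch: "\<And>j. laurent_at_top (\<lambda>t. \<gamma> t $ j)"
    and close: "eventually (\<lambda>t. \<forall>j. \<bar>\<gamma> t $ j\<bar> \<le> C * t ^ D \<and>
                  \<bar>\<gamma> t $ j - \<gamma>h t $ j\<bar> \<le> C / t ^ ((d - 1) * D + 1)) at_top"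
    using laurent_series_curve_truncation[OF conv gamma_def gammah_def] d2 by auto
  have \<gamma>_top: "filterlim (\<lambda>t. norm (\<gamma> t)) at_top at_top"
    using filterlim_mono[OF branch_at_infinity order_refl at_top_le_at_infinity] .
  have f_top: "((\<lambda>t. f (\<gamma> t)) \<longlongrightarrow> t0) at_top"
    using tendsto_mono[OF at_top_le_at_infinity f_lim] .
  have "f differentiable (at x)" for x
    unfolding f by (rule differentiableI[OF has_derivative_polynomial])
  moreover have "laurent_at_top (\<lambda>t. f (\<gamma> t))"
    unfolding f by (rule laurent_at_top_polynomial[OF branch])
  moreover have "eventually (\<lambda>t. \<gamma> t \<in> milnor_set f a) at_top"
    using eventually_gt_at_top[of "\<bar>R\<bar>"] by eventually_elim (simp add: in_milnor)
  ultimately have gradient: "((\<lambda>t. partial f i (\<gamma> t)) \<longlongrightarrow> 0) at_top"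
      "((\<lambda>t. \<gamma> t $ j * partial f i (\<gamma> t)) \<longlongrightarrow> 0) at_top" for i j
    using milnor_branch_gradient_tendsto_zero[OF _ branch _ _ \<gamma>_top f_top] by blast+
  note truncation = close_curves_polynomial_diffs_tendsto_zero[OF f deg close]
  show ?thesis
    using \<gamma>_top f_top gradient filterlim_norm_at_top_close[OF \<gamma>_top truncation(4)]
      Lim_transform2[OF f_top truncation(1)] Lim_transform2[OF gradient(1) truncation(2)]
      Lim_transform2[OF gradient(2) truncation(3)]
    by blast
qed

end
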